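(* Let $(\mathbf X(t),\mathbf V(t),\tilde{\mathbf D}(t),\mathbf B(t))$ be a continuously differentiable solution of $$\frac{d\mathbf X_p}{dt}=\mathbf V_p,\qquad \frac{dV_{p,\alpha}}{dt}=\frac qm\Big((\tilde{\mathbb H}_2\tilde{\mathbf D})^\alpha\cdot\tilde{\mathcal R}_2^\alpha(S_p)+(\mathbf V_p\times\mathbf b_p)_\alpha\Big),$$ $$\frac{d\mathbf B}{dt}=-\mathbb C\tilde{\mathbb H}_2\tilde{\mathbf D},\qquad \frac{d\tilde{\mathbf D}}{dt}=\mathbb C^\top\mathbb H_2\mathbf B-\sum_{p=1}^{N_p}w_pq\,\tilde{\mathcal R}_2(\mathbf V_pS_p),$$ for $p=1,\dots,N_p$, $\alpha\in\{x,y,z\}$. If at $t=0$ $$\tilde{\mathbb D}\tilde{\mathbf D}=\sum_{p=1}^{N_p}w_pq\,\tilde{\mathcal R}_3(S_p)\quad\text{and}\quad\mathbb D\mathbf B=0,$$ then both identities hold for all $t$ for which the solution exists.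
   Context: Periodic box $\Omega=[0,L_1)\times[0,L_2)\times[0,L_3)$ with primal nodes $(x_i,y_j,z_k)$ (extended periodically) and dual nodes at midpoints $(x_{i+\frac12},y_{j+\frac12},z_{k+\frac12})$, $x_{i+\frac12}=\frac{x_i+x_{i+1}}2$; $M=M_1M_2M_3$ nodes; arrays indexed periodically by $(i,j,k)$. Forward differences $(\delta_xf)_{ijk}=f_{i+1,j,k}-f_{ijk}$ and backward differences $(\tilde\delta_xf)_{ijk}=f_{ijk}-f_{i-1,j,k}$ (similarly in $y,z$). $\mathbb C(E^x,E^y,E^z)=(\delta_yE^z-\delta_zE^y,\delta_zE^x-\delta_xE^z,\delta_xE^y-\delta_yE^x)$, $\mathbb D(B^x,B^y,B^z)=\sum_\alpha\delta_\alpha B^\alpha$, $\tilde{\mathbb D}(D^x,D^y,D^z)=\sum_\alpha\tilde\delta_\alpha D^\alpha$. $\mathbb H_2,\tilde{\mathbb H}_2$ are given $3M\times3M$ matrices (symmetric positive definite discrete Hodge operators). Particles $p$ have weights $w_p>0$, charge $q$, mass $m>0$; $S$ is a continuously differentiable $\Omega$-periodic kernel, $S_p(\mathbf x)=S(\mathbf x-\mathbf X_p)$. Dual reductions of scalar $g$: $\tilde{\mathcal R}_1^x(g)_{ijk}=\int_{x_{i-\frac12}}^{x_{i+\frac12}}g(x,y_{j+\frac12},z_{k+\frac12})dx$ (analogously $y,z$); $\tilde{\mathcal R}_2^x(g)_{ijk}=\int_{y_{j-\frac12}}^{y_{j+\frac12}}\int_{z_{k-\frac12}}^{z_{k+\frac12}}g(x_{i+\frac12},y,z)dz\,dy$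 (analogously $y,z$); $\tilde{\mathcal R}_3(g)_{ijk}=\int_{[x_{i-\frac12},x_{i+\frac12}]\times[y_{j-\frac12},y_{j+\frac12}]\times[z_{k-\frac12},z_{k+\frac12}]}g$. For a vector $\mathbf v\in\mathbb R^3$, $\tilde{\mathcal R}_2(\mathbf vS_p)$ is the vector array with components $v_\alpha\tilde{\mathcal R}_2^\alpha(S_p)$. $\mathbf b_p=(\mathbf B^x\cdot\tilde{\mathcal R}_1^x(S_p),\mathbf B^y\cdot\tilde{\mathcal R}_1^y(S_p),\mathbf B^z\cdot\tilde{\mathcal R}_1^z(S_p))$. *)

theory Defs
  imports "HOL-Analysis.Analysis" "HOL-Analysis.Cross3"
begin

text \<open>Axes are numbered 0,1,2 (= x,y,z). A grid index is a triple
  (i,j,k) with i < M 0, j < M 1, k < M 2; arrays are functions on such triples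
  (only values on Idx M matter), indices wrap around periodically.
  Vector arrays are functions nat => idx => real (component alpha in {0,1,2}).
  The 3M x 3M matrices are functions on (nat * idx) x (nat * idx).
  Primal node coordinates along axis alpha are g alpha i (i :: int, periodically
  extended: g alpha (i + M alpha) = g alpha i + L alpha).\<close>

type_synonym idx = "nat \<times> nat \<times> nat"

definition Idx :: "(nat \<Rightarrow> nat) \<Rightarrow> idx set" where
  "Idx M = {0..<M 0} \<times> {0..<M 1} \<times> {0..<M 2}"

definition nxt :: "(nat \<Rightarrow> nat) \<Rightarrow> nat \<Rightarrow> idx \<Rightarrow> idx" where
  "nxt M a n = (case n of (i,j,k) \<Rightarrow>
      if a = 0 then ((i+1) mod M 0, j, k)
      else if a = 1 then (i, (j+1) mod M 1, k)
      else (i, j, (k+1) mod M 2))"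

definition prv :: "(nat \<Rightarrow> nat) \<Rightarrow> nat \<Rightarrow> idx \<Rightarrow> idx" where
  "prv M a n = (case n of (i,j,k) \<Rightarrow>
      if a = 0 then ((i + M 0 - 1) mod M 0, j, k)
      else if a = 1 then (i, (j + M 1 - 1) mod M 1, k)
      else (i, j, (k + M 2 - 1) mod M 2))"

definition fdiff :: "(nat \<Rightarrow> nat) \<Rightarrow> nat \<Rightarrow> (idx \<Rightarrow> real) \<Rightarrow> idx \<Rightarrow> real" where
  "fdiff M a f n = f (nxt M a n) - f n"

definition bdiff :: "(nat \<Rightarrow> nat) \<Rightarrow> nat \<Rightarrow> (idx \<Rightarrow> real) \<Rightarrow> idx \<Rightarrow> real" where
  "bdiff M a f n = f n - f (prv M a n)"

definition curl :: "(nat \<Rightarrow> nat) \<Rightarrow> (nat \<Rightarrow> idx \<Rightarrow> real) \<Rightarrow> nat \<Rightarrow> idx \<Rightarrow> real" where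
  "curl M E a n =
     (if a = 0 then fdiff M 1 (E 2) n - fdiff M 2 (E 1) n
      else if a = 1 then fdiff M 2 (E 0) n - fdiff M 0 (E 2) n
      else fdiff M 0 (E 1) n - fdiff M 1 (E 0) n)"

definition ddiv :: "(nat \<Rightarrow> nat) \<Rightarrow> (nat \<Rightarrow> idx \<Rightarrow> real) \<Rightarrow> idx \<Rightarrow> real" where
  "ddiv M B n = (\<Sum>a<3. fdiff M a (B a) n)"

definition ddiv_dual :: "(nat \<Rightarrow> nat) \<Rightarrow> (nat \<Rightarrow> idx \<Rightarrow> real) \<Rightarrow> idx \<Rightarrow> real" where
  "ddiv_dual M D n = (\<Sum>a<3. bdiff M a (D a) n)"

text \<open>transpose of C: (C^T F)_(b,m) = sum_(a,n) C_((a,n),(b,m)) F_(a,n), where the matrix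
  entries of C are obtained by applying C to unit arrays\<close>
definition unit_arr :: "nat \<Rightarrow> idx \<Rightarrow> nat \<Rightarrow> idx \<Rightarrow> real" where
  "unit_arr b m = (\<lambda>c l. if c = b \<and> l = m then 1 else 0)"

definition curl_T :: "(nat \<Rightarrow> nat) \<Rightarrow> (nat \<Rightarrow> idx \<Rightarrow> real) \<Rightarrow> nat \<Rightarrow> idx \<Rightarrow> real" where
  "curl_T M F b m = (\<Sum>a<3. \<Sum>n\<in>Idx M. curl M (unit_arr b m) a n * F a n)"

definition mat_app :: "(nat \<times> idx \<Rightarrow> nat \<times> idx \<Rightarrow> real) \<Rightarrow> (nat \<Rightarrow> nat)
    \<Rightarrow> (nat \<Rightarrow> idx \<Rightarrow> real) \<Rightarrow> nat \<Rightarrow> idx \<Rightarrow> real" where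
  "mat_app H M E a n = (\<Sum>b<3. \<Sum>m\<in>Idx M. H (a,n) (b,m) * E b m)"

definition spd :: "(nat \<Rightarrow> nat) \<Rightarrow> (nat \<times> idx \<Rightarrow> nat \<times> idx \<Rightarrow> real) \<Rightarrow> bool" where
  "spd M H \<longleftrightarrow>
     (\<forall>u\<in>{..<3} \<times> Idx M. \<forall>v\<in>{..<3} \<times> Idx M. H u v = H v u) \<and>
     (\<forall>E :: nat \<times> idx \<Rightarrow> real. (\<exists>u\<in>{..<3} \<times> Idx M. E u \<noteq> 0) \<longrightarrow>
        0 < (\<Sum>u\<in>{..<3} \<times> Idx M. \<Sum>v\<in>{..<3} \<times> Idx M. E u * H u v * E v))"

definition grid_ok :: "(nat \<Rightarrow> nat) \<Rightarrow> (nat \<Rightarrow> real) \<Rightarrow> (nat \<Rightarrow> int \<Rightarrow> real) \<Rightarrow> bool" where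
  "grid_ok M L g \<longleftrightarrow> (\<forall>a<3. 0 < M a \<and> 0 < L a \<and> strict_mono (g a) \<and>
      (\<forall>i. g a (i + int (M a)) = g a i + L a) \<and>
      0 \<le> g a 0 \<and> g a (int (M a) - 1) < L a)"

text \<open>half (dual) node coordinate x_(i+1/2)\<close>
definition hn :: "(nat \<Rightarrow> int \<Rightarrow> real) \<Rightarrow> nat \<Rightarrow> int \<Rightarrow> real" where
  "hn g a i = (g a i + g a (i + 1)) / 2"

definition pt :: "real \<Rightarrow> real \<Rightarrow> real \<Rightarrow> real^3" where
  "pt a b c = vector [a, b, c]"

definition comp3 :: "real^3 \<Rightarrow> nat \<Rightarrow> real" where
  "comp3 v a = (if a = 0 then v $ 1 else if a = 1 then v $ 2 else v $ 3)"

definition R1 :: "(nat \<Rightarrow> int \<Rightarrow> real) \<Rightarrow> (real^3 \<Rightarrow> real) \<Rightarrow> nat \<Rightarrow> idx \<Rightarrow> real" where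
  "R1 g f a n = (case n of (i,j,k) \<Rightarrow>
     if a = 0 then integral {hn g 0 (int i - 1)..hn g 0 (int i)}
                     (\<lambda>s. f (pt s (hn g 1 (int j)) (hn g 2 (int k))))
     else if a = 1 then integral {hn g 1 (int j - 1)..hn g 1 (int j)}
                     (\<lambda>s. f (pt (hn g 0 (int i)) s (hn g 2 (int k))))
     else integral {hn g 2 (int k - 1)..hn g 2 (int k)}
                     (\<lambda>s. f (pt (hn g 0 (int i)) (hn g 1 (int j)) s)))"

definition R2 :: "(nat \<Rightarrow> int \<Rightarrow> real) \<Rightarrow> (real^3 \<Rightarrow> real) \<Rightarrow> nat \<Rightarrow> idx \<Rightarrow> real" where
  "R2 g f a n = (case n of (i,j,k) \<Rightarrow>
     if a = 0 then integral ({hn g 1 (int j - 1)..hn g 1 (int j)} \<times> {hn g 2 (int k - 1)..hn g 2 (int k)})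
                     (\<lambda>(y,z). f (pt (hn g 0 (int i)) y z))
     else if a = 1 then integral ({hn g 0 (int i - 1)..hn g 0 (int i)} \<times> {hn g 2 (int k - 1)..hn g 2 (int k)})
                     (\<lambda>(x,z). f (pt x (hn g 1 (int j)) z))
     else integral ({hn g 0 (int i - 1)..hn g 0 (int i)} \<times> {hn g 1 (int j - 1)..hn g 1 (int j)})
                     (\<lambda>(x,y). f (pt x y (hn g 2 (int k)))))"

definition R3 :: "(nat \<Rightarrow> int \<Rightarrow> real) \<Rightarrow> (real^3 \<Rightarrow> real) \<Rightarrow> idx \<Rightarrow> real" where
  "R3 g f n = (case n of (i,j,k) \<Rightarrow>
     integral ({hn g 0 (int i - 1)..hn g 0 (int i)} \<times> {hn g 1 (int j - 1)..hn g 1 (int j)}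
               \<times> {hn g 2 (int k - 1)..hn g 2 (int k)})
       (\<lambda>(x,y,z). f (pt x y z)))"

definition kshift :: "(real^3 \<Rightarrow> real) \<Rightarrow> real^3 \<Rightarrow> real^3 \<Rightarrow> real" where
  "kshift S Xp = (\<lambda>x. S (x - Xp))"

definition efield_p :: "(nat \<Rightarrow> nat) \<Rightarrow> (nat \<Rightarrow> int \<Rightarrow> real) \<Rightarrow> (nat \<times> idx \<Rightarrow> nat \<times> idx \<Rightarrow> real)
    \<Rightarrow> (nat \<Rightarrow> idx \<Rightarrow> real) \<Rightarrow> (real^3 \<Rightarrow> real) \<Rightarrow> real^3" where
  "efield_p M g Ht D Sp = pt
     (\<Sum>n\<in>Idx M. mat_app Ht M D 0 n * R2 g Sp 0 n)
     (\<Sum>n\<in>Idx M. mat_app Ht M D 1 n * R2 g Sp 1 n)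
     (\<Sum>n\<in>Idx M. mat_app Ht M D 2 n * R2 g Sp 2 n)"

definition bfield_p :: "(nat \<Rightarrow> nat) \<Rightarrow> (nat \<Rightarrow> int \<Rightarrow> real)
    \<Rightarrow> (nat \<Rightarrow> idx \<Rightarrow> real) \<Rightarrow> (real^3 \<Rightarrow> real) \<Rightarrow> real^3" where
  "bfield_p M g B Sp = pt
     (\<Sum>n\<in>Idx M. B 0 n * R1 g Sp 0 n)
     (\<Sum>n\<in>Idx M. B 1 n * R1 g Sp 1 n)
     (\<Sum>n\<in>Idx M. B 2 n * R1 g Sp 2 n)"

definition c1_on :: "real set \<Rightarrow> (real \<Rightarrow> real) \<Rightarrow> bool" where
  "c1_on T f \<longleftrightarrow> (\<exists>f'. (\<forall>t\<in>T. (f has_real_derivative f' t) (at t within T)) \<and> continuous_on T f')"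

end

theory Submission
  imports Defs
begin

text \<open>Both constraints have zero time derivative. Forward differences commute, so the
  discrete divergence of a discrete curl vanishes; this settles the magnetic constraint.
  Summation by parts on the periodic grid identifies the transpose of the curl with the curl
  built from backward differences, whose backward divergence vanishes too. Hence the time
  derivative of the dual divergence of the displacement is minus the dual divergence of the
  particle current, and it remains to show that the particle charge satisfies the matching
  continuity equation. Moving a particle by h changes the dual-cell integral of its kernel by
  minus the cell integral of the gradient of the kernel dotted with h (differentiation under the
  integral sign). Integrating each partial derivative along its own axis (Fubini and the
  fundamental theorem of calculus) turns the cell integral into the difference of the integrals
  over two opposite faces, i.e. into the backward difference of the face reductions; periodicity
  of the kernel takes care of the cells at the boundary of the box.\<close>

section \<open>Periodic grid indexing\<close>

lemma sum_lessThan_3: "(\<Sum>a<3. f a) = f 0 + f 1 + (f (2::nat) :: 'a::comm_monoid_add)"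
  by (simp add: eval_nat_numeral)

lemma finite_Idx [simp]: "finite (Idx M)"
  by (simp add: Idx_def)

lemma add_pred_mod:
  assumes "i < N"
  shows "(i + N - Suc 0) mod N = (if i = 0 then N - 1 else i - 1)"
  using assms by (cases i) (simp_all add: mod_if)

lemma nxt_commute: "nxt M a (nxt M b n) = nxt M b (nxt M a n)"
  by (cases n) (auto simp: nxt_def)

lemma prv_commute: "prv M a (prv M b n) = prv M b (prv M a n)"
  by (cases n) (auto simp: prv_def)

lemma nxt_prv: "n \<in> Idx M \<Longrightarrow> nxt M a (prv M a n) = n"
  by (cases n) (auto simp: prv_def nxt_def Idx_def add_pred_mod mod_Suc)

lemma prv_nxt: "n \<in> Idx M \<Longrightarrow> prv M a (nxt M a n) = n"
  by (cases n) (auto simp: prv_def nxt_def Idx_def add_pred_mod mod_Suc)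

lemma nxt_in_Idx: "\<forall>a<3. 0 < M a \<Longrightarrow> n \<in> Idx M \<Longrightarrow> nxt M a n \<in> Idx M"
  by (cases n) (auto simp: nxt_def Idx_def)

lemma prv_in_Idx: "\<forall>a<3. 0 < M a \<Longrightarrow> n \<in> Idx M \<Longrightarrow> prv M a n \<in> Idx M"
  by (cases n) (auto simp: prv_def Idx_def)

section \<open>Discrete vector calculus\<close>

lemma sum_fdiff_mult:
  assumes "\<forall>a<3. 0 < M a"
  shows "(\<Sum>n\<in>Idx M. fdiff M a E n * F n) = - (\<Sum>n\<in>Idx M. E n * bdiff M a F n)"
proof -
  have "(\<Sum>n\<in>Idx M. E (nxt M a n) * F n) = (\<Sum>n\<in>Idx M. E n * F (prv M a n))"
    by (rule sum.reindex_bij_witness[where i="prv M a" and j="nxt M a"])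
       (use assms in \<open>auto simp: nxt_in_Idx prv_in_Idx nxt_prv prv_nxt\<close>)
  then show ?thesis
    by (simp add: fdiff_def bdiff_def algebra_simps sum_subtractf)
qed

lemma ddiv_curl: "ddiv M (curl M E) n = 0"
  by (simp add: ddiv_def sum_lessThan_3 curl_def fdiff_def nxt_commute)

definition curl_dual :: "(nat \<Rightarrow> nat) \<Rightarrow> (nat \<Rightarrow> idx \<Rightarrow> real) \<Rightarrow> nat \<Rightarrow> idx \<Rightarrow> real" where
  "curl_dual M F a n =
     (if a = 0 then bdiff M 1 (F 2) n - bdiff M 2 (F 1) n
      else if a = 1 then bdiff M 2 (F 0) n - bdiff M 0 (F 2) n
      else bdiff M 0 (F 1) n - bdiff M 1 (F 0) n)"

lemma ddiv_dual_curl_dual: "ddiv_dual M (curl_dual M F) n = 0"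
  by (simp add: ddiv_dual_def sum_lessThan_3 curl_dual_def bdiff_def prv_commute)

lemma sum_curl_mult:
  assumes "\<forall>a<3. 0 < M a"
  shows "(\<Sum>a<3. \<Sum>n\<in>Idx M. curl M E a n * F a n) = (\<Sum>a<3. \<Sum>n\<in>Idx M. E a n * curl_dual M F a n)"
  by (simp add: sum_lessThan_3 curl_def curl_dual_def left_diff_distrib right_diff_distrib
      sum_subtractf sum_fdiff_mult[OF assms])

lemma curl_T_eq_curl_dual:
  assumes "\<forall>a<3. 0 < M a" and "a < 3" and "n \<in> Idx M"
  shows "curl_T M F a n = curl_dual M F a n"
proof -
  have "curl_T M F a n = (\<Sum>b<3. \<Sum>m\<in>Idx M. unit_arr a n b m * curl_dual M F b m)"
    unfolding curl_T_def sum_curl_mult[OF assms(1)] ..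
  also have "\<dots> = curl_dual M F a n"
    using assms(2,3) by (simp add: unit_arr_def if_distrib[of "\<lambda>x. x * _"] conj_commute
        flip: if_if_eq_conj sum.inter_filter cong: if_cong)
  finally show ?thesis .
qed

lemma ddiv_dual_curl_T:
  assumes "\<forall>a<3. 0 < M a" and "n \<in> Idx M"
  shows "ddiv_dual M (curl_T M F) n = 0"
proof -
  have "ddiv_dual M (curl_T M F) n = ddiv_dual M (curl_dual M F) n"
    using assms by (simp add: ddiv_dual_def bdiff_def curl_T_eq_curl_dual prv_in_Idx)
  then show ?thesis
    by (simp add: ddiv_dual_curl_dual)
qed

lemma ddiv_diff: "ddiv M (\<lambda>a m. E a m - F a m) n = ddiv M E n - ddiv M F n"
  by (simp add: ddiv_def fdiff_def sum_subtractf[symmetric] algebra_simps)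

lemma ddiv_dual_diff: "ddiv_dual M (\<lambda>a m. E a m - F a m) n = ddiv_dual M E n - ddiv_dual M F n"
  by (simp add: ddiv_dual_def bdiff_def sum_subtractf[symmetric] algebra_simps)

lemma ddiv_dual_weighted_sum:
  "ddiv_dual M (\<lambda>a m. \<Sum>p\<in>P. c p * (v p a * r p a m)) n
     = (\<Sum>p\<in>P. c p * (\<Sum>a<3. v p a * bdiff M a (r p a) n))"
  by (simp add: ddiv_dual_def bdiff_def sum_subtractf[symmetric] sum_distrib_left
      right_diff_distrib sum.swap[of _ "{..<3}"])

section \<open>Points and periodic kernels\<close>

lemma pt_nth [simp]: "pt a b c $ 1 = a" "pt a b c $ 2 = b" "pt a b c $ 3 = c"
  by (simp_all add: pt_def)

lemma pt_add: "pt a b c + pt a' b' c' = pt (a + a') (b + b') (c + c')"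
  by (simp add: vec_eq_iff forall_3)

lemma scaleR_pt: "r *\<^sub>R pt a b c = pt (r * a) (r * b) (r * c)"
  by (simp add: vec_eq_iff forall_3)

lemma inner_pt: "v \<bullet> pt a b c = v $ 1 * a + v $ 2 * b + v $ 3 * c"
  by (simp add: inner_vec_def sum_3)

lemma continuous_on_pt [continuous_intros]:
  assumes "continuous_on A f" "continuous_on A g" "continuous_on A h"
  shows "continuous_on A (\<lambda>u. pt (f u) (g u) (h u))"
proof -
  have "(\<lambda>u. pt (f u) (g u) (h u)) = (\<lambda>u. f u *\<^sub>R pt 1 0 0 + g u *\<^sub>R pt 0 1 0 + h u *\<^sub>R pt 0 0 1)"
    by (simp add: scaleR_pt pt_add)
  then show ?thesis
    by (simp only:) (intro continuous_intros assms)
qed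

lemma comp3_scaleR: "comp3 (r *\<^sub>R v) a = r * comp3 v a"
  by (simp add: comp3_def)

lemma continuous_on_comp3 [continuous_intros]:
  "continuous_on A F \<Longrightarrow> continuous_on A (\<lambda>x. comp3 (F x) a)"
  by (cases "a = 0"; cases "a = 1") (simp_all add: comp3_def continuous_on_component)

lemma inner_eq_sum_comp3: "u \<bullet> v = (\<Sum>a<3. comp3 v a * comp3 u a)"
  by (simp add: inner_vec_def sum_3 sum_lessThan_3 comp3_def mult.commute)

definition periodic3 :: "(nat \<Rightarrow> real) \<Rightarrow> (real^3 \<Rightarrow> real) \<Rightarrow> bool" where
  "periodic3 L f \<longleftrightarrow>
     (\<forall>x. f (x + pt (L 0) 0 0) = f x \<and> f (x + pt 0 (L 1) 0) = f x \<and> f (x + pt 0 0 (L 2)) = f x)"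

lemma periodic3_kshift: "periodic3 L S \<Longrightarrow> periodic3 L (kshift S Y)"
  by (simp add: periodic3_def kshift_def diff_add_eq[symmetric])

lemma periodic3_pt:
  assumes "periodic3 L f"
  shows "f (pt (x + L 0) y z) = f (pt x y z)" "f (pt x (y + L 1) z) = f (pt x y z)"
    "f (pt x y (z + L 2)) = f (pt x y z)"
  using assms unfolding periodic3_def by (metis add_0_right pt_add)+

lemma hn_pred_le:
  assumes "grid_ok M L g" "a < 3"
  shows "hn g a (i - 1) \<le> hn g a i"
proof -
  have "strict_mono (g a)"
    using assms unfolding grid_ok_def by blast
  then have "g a (i - 1) < g a i" "g a i < g a (i + 1)"
    by (simp_all add: strict_mono_less)
  then show ?thesis
    by (simp add: hn_def)
qed

lemma hn_add_period:
  assumes "grid_ok M L g" "a < 3"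
  shows "hn g a (i + int (M a)) = hn g a i + L a"
proof -
  have "g a (i + int (M a)) = g a i + L a" "g a (i + 1 + int (M a)) = g a (i + 1) + L a"
    using assms unfolding grid_ok_def by blast+
  then show ?thesis
    by (simp add: hn_def add.commute add.left_commute field_simps)
qed

lemma hn_prv_index:
  assumes "grid_ok M L g" "a < 3" "i < M a"
  shows "hn g a (int ((i + M a - Suc 0) mod M a)) =
    (if i = 0 then hn g a (int i - 1) + L a else hn g a (int i - 1))"
proof (cases "i = 0")
  case True
  then have "int ((i + M a - Suc 0) mod M a) = -1 + int (M a)"
    using assms(3) by (simp add: add_pred_mod of_nat_diff)
  then show ?thesis
    using True hn_add_period[OF assms(1,2), of "-1"] by simp
qed (use assms(3) in \<open>simp add: add_pred_mod of_nat_diff\<close>)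

lemma periodic3_pt_hn_prv:
  assumes grid: "grid_ok M L g" and f_per: "periodic3 L f" and ijk: "(i,j,k) \<in> Idx M"
  shows "f (pt (hn g 0 (int ((i + M 0 - Suc 0) mod M 0))) y z) = f (pt (hn g 0 (int i - 1)) y z)"
    and "f (pt x (hn g 1 (int ((j + M 1 - Suc 0) mod M 1))) z) = f (pt x (hn g 1 (int j - 1)) z)"
    and "f (pt x y (hn g 2 (int ((k + M 2 - Suc 0) mod M 2)))) = f (pt x y (hn g 2 (int k - 1)))"
  using ijk by (simp_all add: Idx_def hn_prv_index[OF grid] periodic3_pt[OF f_per, unfolded One_nat_def])

section \<open>Divergence theorem on a dual cell\<close>

definition dual_edge :: "(nat \<Rightarrow> int \<Rightarrow> real) \<Rightarrow> nat \<Rightarrow> nat \<Rightarrow> real set" where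
  "dual_edge g a i = {hn g a (int i - 1)..hn g a (int i)}"

definition dual_cell :: "(nat \<Rightarrow> int \<Rightarrow> real) \<Rightarrow> idx \<Rightarrow> (real \<times> real \<times> real) set" where
  "dual_cell g n = (case n of (i,j,k) \<Rightarrow> dual_edge g 0 i \<times> dual_edge g 1 j \<times> dual_edge g 2 k)"

lemma R3_eq_integral_dual_cell: "R3 g f n = integral (dual_cell g n) (\<lambda>(x,y,z). f (pt x y z))"
  by (cases n) (simp add: R3_def dual_cell_def dual_edge_def)

lemma dual_cell_eq_cbox:
  "dual_cell g (i,j,k) = cbox (hn g 0 (int i - 1), hn g 1 (int j - 1), hn g 2 (int k - 1))
                             (hn g 0 (int i), hn g 1 (int j), hn g 2 (int k))"
  by (simp add: dual_cell_def dual_edge_def cbox_Pair_eq)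

lemma integrable_on_dual_cell:
  fixes h :: "real \<times> real \<times> real \<Rightarrow> real"
  assumes "continuous_on UNIV h"
  shows "h integrable_on dual_cell g n"
proof -
  obtain i j k where "n = (i,j,k)"
    using prod_cases3 by blast
  then show ?thesis
    by (simp add: dual_cell_eq_cbox integrable_continuous continuous_on_subset[OF assms subset_UNIV])
qed

lemma integral_box3_iterated:
  fixes h :: "real \<times> real \<times> real \<Rightarrow> real"
  assumes h: "continuous_on UNIV h"
  shows "integral ({a0..b0} \<times> {a1..b1} \<times> {a2..b2}) h
           = integral ({a1..b1} \<times> {a2..b2}) (\<lambda>(y,z). integral {a0..b0} (\<lambda>x. h (x,y,z)))"
    and "integral ({a0..b0} \<times> {a1..b1} \<times> {a2..b2}) h
           = integral ({a0..b0} \<times> {a2..b2}) (\<lambda>(x,z). integral {a1..b1} (\<lambda>y. h (x,y,z)))"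
    and "integral ({a0..b0} \<times> {a1..b1} \<times> {a2..b2}) h
           = integral ({a0..b0} \<times> {a1..b1}) (\<lambda>(x,y). integral {a2..b2} (\<lambda>z. h (x,y,z)))"
proof -
  have cont: "continuous_on A (\<lambda>u. h (f u))" if "continuous_on A f" for A and f :: "'a::topological_space \<Rightarrow> _"
    using continuous_on_compose2[OF h that] by simp
  have cont_param: "continuous_on A (\<lambda>u. integral {a..b} (\<lambda>s. k u s))"
    if "continuous_on UNIV (\<lambda>(u, s). k u s)" for A a b and k :: "real \<times> real \<Rightarrow> real \<Rightarrow> real"
    using integral_continuous_on_param[of A a b k] continuous_on_subset[OF that] by (simp add: box_real)
  note box = cbox_Pair_eq box_real(2)
  have first: "integral ({a0..b0} \<times> {a1..b1} \<times> {a2..b2}) h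
      = integral {a0..b0} (\<lambda>x. integral ({a1..b1} \<times> {a2..b2}) (\<lambda>yz. h (x, yz)))"
    using integral_prod_continuous[of a0 "(a1,a2)" b0 "(b1,b2)" h] by (simp add: box cont)
  also have "\<dots> = integral {a0..b0} (\<lambda>x. integral {a1..b1} (\<lambda>y. integral {a2..b2} (\<lambda>z. h (x,y,z))))"
    using integral_prod_continuous[of a1 a2 b1 b2 "\<lambda>yz. h (_, yz)"] by (simp add: box cont continuous_intros)
  finally have outer: "integral ({a0..b0} \<times> {a1..b1} \<times> {a2..b2}) h = \<dots>" .
  show "integral ({a0..b0} \<times> {a1..b1} \<times> {a2..b2}) h
      = integral ({a1..b1} \<times> {a2..b2}) (\<lambda>(y,z). integral {a0..b0} (\<lambda>x. h (x,y,z)))"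
    unfolding first
    using integral_swap_continuous[of a0 "(a1,a2)" b0 "(b1,b2)" "\<lambda>x yz. h (x, yz)"]
    by (simp add: box cont case_prod_unfold)
  show "integral ({a0..b0} \<times> {a1..b1} \<times> {a2..b2}) h
      = integral ({a0..b0} \<times> {a1..b1}) (\<lambda>(x,y). integral {a2..b2} (\<lambda>z. h (x,y,z)))"
    unfolding outer
    using integral_prod_continuous[of a0 a1 b0 b1 "\<lambda>(x,y). integral {a2..b2} (\<lambda>z. h (x,y,z))"]
    by (simp add: box cont_param cont continuous_intros case_prod_unfold)
  have "integral {a1..b1} (\<lambda>y. integral {a2..b2} (\<lambda>z. h (x,y,z)))
      = integral {a2..b2} (\<lambda>z. integral {a1..b1} (\<lambda>y. h (x,y,z)))" for x
    using integral_swap_continuous[of a1 a2 b1 b2 "\<lambda>y z. h (x,y,z)"]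
    by (simp add: box cont case_prod_unfold continuous_intros)
  then show "integral ({a0..b0} \<times> {a1..b1} \<times> {a2..b2}) h
      = integral ({a0..b0} \<times> {a2..b2}) (\<lambda>(x,z). integral {a1..b1} (\<lambda>y. h (x,y,z)))"
    unfolding outer
    using integral_prod_continuous[of a0 a2 b0 b2 "\<lambda>(x,z). integral {a1..b1} (\<lambda>y. h (x,y,z))"]
    by (simp add: box cont_param cont continuous_intros case_prod_unfold)
qed

lemma integral_grad_segment:
  fixes f :: "'a::real_inner \<Rightarrow> real"
  assumes f_diff: "\<And>x. (f has_derivative (\<lambda>h. G x \<bullet> h)) (at x)" and "lo \<le> hi"
  shows "integral {lo..hi} (\<lambda>s. G (u + s *\<^sub>R e) \<bullet> e) = f (u + hi *\<^sub>R e) - f (u + lo *\<^sub>R e)"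
proof -
  have "((\<lambda>s. f (u + s *\<^sub>R e)) has_vector_derivative G (u + s *\<^sub>R e) \<bullet> e) (at s within {lo..hi})" for s
    unfolding has_vector_derivative_def
    by (rule has_derivative_compose[OF _ f_diff, THEN has_derivative_eq_rhs])
      (auto intro!: derivative_eq_intros)
  then show ?thesis
    by (intro integral_unique fundamental_theorem_of_calculus[OF \<open>lo \<le> hi\<close>])
qed

lemma integral_grad_pt:
  assumes f_diff: "\<And>x. (f has_derivative (\<lambda>h. G x \<bullet> h)) (at x)" and "lo \<le> hi"
  shows "integral {lo..hi} (\<lambda>x. G (pt x y z) $ 1) = f (pt hi y z) - f (pt lo y z)"
    and "integral {lo..hi} (\<lambda>y. G (pt x y z) $ 2) = f (pt x hi z) - f (pt x lo z)"
    and "integral {lo..hi} (\<lambda>z. G (pt x y z) $ 3) = f (pt x y hi) - f (pt x y lo)"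
  using integral_grad_segment[OF assms, of "pt 0 y z" "pt 1 0 0"]
    integral_grad_segment[OF assms, of "pt x 0 z" "pt 0 1 0"]
    integral_grad_segment[OF assms, of "pt x y 0" "pt 0 0 1"]
  by (simp_all add: scaleR_pt pt_add inner_pt)

lemma bdiff_R2_eq_integral_face:
  assumes grid: "grid_ok M L g" and f_per: "periodic3 L f" and f_cont: "continuous_on UNIV f"
    and ijk: "(i,j,k) \<in> Idx M"
  shows "bdiff M 0 (R2 g f 0) (i,j,k) = integral (dual_edge g 1 j \<times> dual_edge g 2 k)
           (\<lambda>(y,z). f (pt (hn g 0 (int i)) y z) - f (pt (hn g 0 (int i - 1)) y z))"
    and "bdiff M 1 (R2 g f 1) (i,j,k) = integral (dual_edge g 0 i \<times> dual_edge g 2 k)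
           (\<lambda>(x,z). f (pt x (hn g 1 (int j)) z) - f (pt x (hn g 1 (int j - 1)) z))"
    and "bdiff M 2 (R2 g f 2) (i,j,k) = integral (dual_edge g 0 i \<times> dual_edge g 1 j)
           (\<lambda>(x,y). f (pt x y (hn g 2 (int k))) - f (pt x y (hn g 2 (int k - 1))))"
proof -
  have integrable: "(\<lambda>u. f (P u)) integrable_on {a..b} \<times> {c..d}"
    if "continuous_on UNIV P" for P :: "real \<times> real \<Rightarrow> real^3" and a b c d :: real
  proof -
    have "continuous_on (cbox (a,c) (b,d)) (\<lambda>u. f (P u))"
      using continuous_on_compose2[OF f_cont that] continuous_on_subset by fastforce
    from integrable_continuous[OF this] show ?thesis
      by (simp add: cbox_Pair_eq box_real)
  qed
  note R2_prv = R2_def prv_def periodic3_pt_hn_prv[OF grid f_per ijk, unfolded One_nat_def]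
  show "bdiff M 0 (R2 g f 0) (i,j,k) = integral (dual_edge g 1 j \<times> dual_edge g 2 k)
           (\<lambda>(y,z). f (pt (hn g 0 (int i)) y z) - f (pt (hn g 0 (int i - 1)) y z))"
    unfolding bdiff_def case_prod_beta'
    by (subst integral_diff) (auto simp: R2_prv dual_edge_def case_prod_beta' intro!: integrable continuous_intros)
  show "bdiff M 1 (R2 g f 1) (i,j,k) = integral (dual_edge g 0 i \<times> dual_edge g 2 k)
           (\<lambda>(x,z). f (pt x (hn g 1 (int j)) z) - f (pt x (hn g 1 (int j - 1)) z))"
    unfolding bdiff_def case_prod_beta'
    by (subst integral_diff) (auto simp: R2_prv dual_edge_def case_prod_beta' intro!: integrable continuous_intros)
  show "bdiff M 2 (R2 g f 2) (i,j,k) = integral (dual_edge g 0 i \<times> dual_edge g 1 j)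
           (\<lambda>(x,y). f (pt x y (hn g 2 (int k))) - f (pt x y (hn g 2 (int k - 1))))"
    unfolding bdiff_def case_prod_beta'
    by (subst integral_diff) (auto simp: R2_prv dual_edge_def case_prod_beta' intro!: integrable continuous_intros)
qed

lemma bdiff_R2_eq_integral_grad:
  assumes grid: "grid_ok M L g" and f_diff: "\<And>x. (f has_derivative (\<lambda>h. G x \<bullet> h)) (at x)"
    and G_cont: "continuous_on UNIV G" and f_per: "periodic3 L f" and n: "n \<in> Idx M" and a: "a < 3"
  shows "bdiff M a (R2 g f a) n = integral (dual_cell g n) (\<lambda>(x,y,z). comp3 (G (pt x y z)) a)"
proof -
  obtain i j k where ijk: "n = (i,j,k)"
    using prod_cases3 by blast
  have f_cont: "continuous_on UNIV f"
    using f_diff has_derivative_continuous continuous_at_imp_continuous_on by blast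
  have G_pt_cont: "continuous_on UNIV (\<lambda>(x,y,z). G (pt x y z) $ c)" for c
    unfolding case_prod_unfold
    by (intro continuous_on_component continuous_on_compose2[OF G_cont] continuous_intros) auto
  have edge_le: "hn g b (int l - 1) \<le> hn g b (int l)" if "b < 3" for b l
    using hn_pred_le[OF grid that, of "int l"] by simp
  note faces = bdiff_R2_eq_integral_face[OF grid f_per f_cont n[unfolded ijk]]
  note ftc = integral_grad_pt[OF f_diff edge_le]
  note fubini = integral_box3_iterated[OF G_pt_cont]
  consider "a = 0" | "a = 1" | "a = 2"
    using a by linarith
  then show ?thesis
  proof cases
    case 1
    show ?thesis
      unfolding 1 ijk faces(1) dual_cell_def dual_edge_def by (simp add: comp3_def fubini(1) ftc edge_le)
  next
    case 2
    show ?thesis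
      unfolding 2 ijk faces(2) dual_cell_def dual_edge_def by (simp add: comp3_def fubini(2) ftc edge_le)
  next
    case 3
    show ?thesis
      unfolding 3 ijk faces(3) dual_cell_def dual_edge_def by (simp add: comp3_def fubini(3) ftc edge_le)
  qed
qed

lemma integral_dual_cell_grad_inner:
  assumes grid: "grid_ok M L g" and f_diff: "\<And>x. (f has_derivative (\<lambda>h. G x \<bullet> h)) (at x)"
    and G_cont: "continuous_on UNIV G" and f_per: "periodic3 L f" and n: "n \<in> Idx M"
  shows "integral (dual_cell g n) (\<lambda>(x,y,z). G (pt x y z) \<bullet> v)
           = (\<Sum>a<3. comp3 v a * bdiff M a (R2 g f a) n)"
proof -
  define G_a where "G_a a = (\<lambda>(x,y,z). comp3 (G (pt x y z)) a)" for a
  have int: "G_a a integrable_on dual_cell g n" for a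
    unfolding G_a_def case_prod_unfold
    by (intro integrable_on_dual_cell continuous_intros continuous_on_compose2[OF G_cont]) auto
  have eq: "(\<lambda>(x,y,z). G (pt x y z) \<bullet> v) = (\<lambda>u. \<Sum>a<3. comp3 v a * G_a a u)"
    by (simp add: G_a_def inner_eq_sum_comp3 case_prod_unfold)
  have "integral (dual_cell g n) (\<lambda>(x,y,z). G (pt x y z) \<bullet> v)
      = (\<Sum>a<3. comp3 v a * integral (dual_cell g n) (G_a a))"
  proof -
    have "((\<lambda>u. \<Sum>a<3. comp3 v a * G_a a u) has_integral
        (\<Sum>a<3. comp3 v a * integral (dual_cell g n) (G_a a))) (dual_cell g n)"
      by (intro has_integral_sum finite_lessThan has_integral_mult_right integrable_integral int)
    then show ?thesis
      unfolding eq by (rule integral_unique)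
  qed
  then show ?thesis
    by (simp add: G_a_def bdiff_R2_eq_integral_grad[OF grid f_diff G_cont f_per n])
qed

lemma has_derivative_integral_translate:
  fixes S :: "'a::euclidean_space \<Rightarrow> real" and P :: "'b::euclidean_space \<Rightarrow> 'a"
  assumes S_diff: "\<And>x. (S has_derivative (\<lambda>h. GS x \<bullet> h)) (at x)"
    and GS_cont: "continuous_on UNIV GS" and P_cont: "continuous_on UNIV P"
  shows "((\<lambda>Y. integral (cbox a b) (\<lambda>t. S (P t - Y))) has_derivative
           (\<lambda>h. - integral (cbox a b) (\<lambda>t. GS (P t - Y0) \<bullet> h))) (at Y0)"
proof -
  define fx where "fx Y t = - blinfun_inner_left (GS (P t - Y))" for Y t
  have S_cont: "continuous_on UNIV S"
    using S_diff has_derivative_continuous continuous_at_imp_continuous_on by blast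
  have fx_deriv: "((\<lambda>Y. S (P t - Y)) has_derivative blinfun_apply (fx Y t)) (at Y within UNIV)" for Y t
    by (rule has_derivative_compose[OF _ S_diff, THEN has_derivative_eq_rhs])
      (auto intro!: derivative_eq_intros simp: fx_def inner_commute uminus_blinfun.rep_eq)
  have integrable: "(\<lambda>t. S (P t - Y)) integrable_on cbox a b" for Y
    by (intro integrable_continuous continuous_on_compose2[OF S_cont] continuous_intros
        continuous_on_subset[OF P_cont]) auto
  have fx_cont: "continuous_on (UNIV \<times> cbox a b) (\<lambda>(Y, t). fx Y t)"
    unfolding fx_def case_prod_unfold
    by (intro continuous_intros continuous_on_compose2[OF GS_cont]
        continuous_on_compose2[OF P_cont]) auto
  have fx_integrable: "fx Y0 integrable_on cbox a b"
    unfolding fx_def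
    by (intro integrable_continuous continuous_intros continuous_on_compose2[OF GS_cont]
        continuous_on_subset[OF P_cont]) auto
  have "((\<lambda>Y. integral (cbox a b) (\<lambda>t. S (P t - Y))) has_derivative
      blinfun_apply (integral (cbox a b) (fx Y0))) (at Y0 within UNIV)"
    by (rule leibniz_rule) (use fx_deriv integrable fx_cont in auto)
  moreover have "blinfun_apply (integral (cbox a b) (fx Y0)) = (\<lambda>h. - integral (cbox a b) (\<lambda>t. GS (P t - Y0) \<bullet> h))"
    by (rule ext) (simp add: blinfun_apply_integral[OF fx_integrable] fx_def uminus_blinfun.rep_eq inner_commute)
  ultimately show ?thesis
    by simp
qed

lemma R3_kshift_has_derivative:
  assumes grid: "grid_ok M L g" and S_diff: "\<And>x. (S has_derivative (\<lambda>h. GS x \<bullet> h)) (at x)"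
    and GS_cont: "continuous_on UNIV GS" and S_per: "periodic3 L S" and n: "n \<in> Idx M"
  shows "((\<lambda>Y. R3 g (kshift S Y) n) has_derivative
           (\<lambda>h. - (\<Sum>a<3. comp3 h a * bdiff M a (R2 g (kshift S Y0) a) n))) (at Y0)"
proof -
  obtain i j k where ijk: "n = (i,j,k)"
    using prod_cases3 by blast
  define P where "P = (\<lambda>(x,y,z). pt x y z)"
  have R3_eq: "(\<lambda>Y. R3 g (kshift S Y) n) = (\<lambda>Y. integral (dual_cell g n) (\<lambda>t. S (P t - Y)))"
    by (simp add: R3_eq_integral_dual_cell kshift_def P_def case_prod_unfold)
  have kshift_diff: "(kshift S Y0 has_derivative (\<lambda>h. GS (x - Y0) \<bullet> h)) (at x)" for x
    unfolding kshift_def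
    by (rule has_derivative_compose[OF _ S_diff, THEN has_derivative_eq_rhs]) (auto intro!: derivative_eq_intros)
  have "integral (dual_cell g n) (\<lambda>t. GS (P t - Y0) \<bullet> h)
      = (\<Sum>a<3. comp3 h a * bdiff M a (R2 g (kshift S Y0) a) n)" for h
    using integral_dual_cell_grad_inner[OF grid kshift_diff _ periodic3_kshift[OF S_per] n]
    by (simp add: P_def case_prod_unfold continuous_on_compose2[OF GS_cont] continuous_intros)
  moreover have "((\<lambda>Y. integral (dual_cell g n) (\<lambda>t. S (P t - Y))) has_derivative
      (\<lambda>h. - integral (dual_cell g n) (\<lambda>t. GS (P t - Y0) \<bullet> h))) (at Y0)"
    unfolding ijk dual_cell_eq_cbox
    by (rule has_derivative_integral_translate[OF S_diff GS_cont])
      (simp add: P_def case_prod_unfold continuous_intros)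
  ultimately show ?thesis
    by (simp add: R3_eq)
qed

section \<open>Conservation of the constraints\<close>

lemma has_real_derivative_zero_imp_eq_initial:
  fixes f :: "real \<Rightarrow> real"
  assumes "convex T" "0 \<in> T" "\<And>t. t \<in> T \<Longrightarrow> (f has_real_derivative 0) (at t within T)" "t \<in> T"
  shows "f t = f 0"
proof -
  obtain c where "\<forall>s\<in>T. f s = c"
    using has_field_derivative_zero_constant[OF assms(1,3)] by blast
  then show ?thesis
    using assms(2,4) by simp
qed

lemma ddiv_eq_initial:
  assumes M_pos: "\<forall>a<3. 0 < M a" and T: "convex T" "0 \<in> T"
    and B_deriv: "\<forall>a<3. \<forall>n\<in>Idx M. \<forall>t\<in>T.
                    ((\<lambda>s. B s a n) has_real_derivative - curl M (E t) a n) (at t within T)"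
    and n: "n \<in> Idx M" and t: "t \<in> T"
  shows "ddiv M (B t) n = ddiv M (B 0) n"
proof (rule has_real_derivative_zero_imp_eq_initial[OF T _ t])
  fix s assume s: "s \<in> T"
  have "((\<lambda>s. ddiv M (B s) n) has_real_derivative ddiv M (\<lambda>a m. 0 - curl M (E s) a m) n) (at s within T)"
    unfolding ddiv_def fdiff_def
    by (intro DERIV_sum DERIV_diff) (use B_deriv nxt_in_Idx[OF M_pos n] n s in auto)
  then show "((\<lambda>s. ddiv M (B s) n) has_real_derivative 0) (at s within T)"
    by (simp only: ddiv_diff ddiv_curl) (simp add: ddiv_def fdiff_def)
qed

lemma ddiv_dual_minus_charge_eq_initial:
  assumes M_pos: "\<forall>a<3. 0 < M a" and T: "convex T" "0 \<in> T"
    and D_deriv: "\<forall>a<3. \<forall>n\<in>Idx M. \<forall>t\<in>T.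
                    ((\<lambda>s. D s a n) has_real_derivative curl_T M (H t) a n - J t a n) (at t within T)"
    and rho_deriv: "\<forall>t\<in>T. (rho has_real_derivative - ddiv_dual M (J t) n) (at t within T)"
    and n: "n \<in> Idx M" and t: "t \<in> T"
  shows "ddiv_dual M (D t) n - rho t = ddiv_dual M (D 0) n - rho 0"
proof (rule has_real_derivative_zero_imp_eq_initial[OF T _ t])
  fix s assume s: "s \<in> T"
  have "((\<lambda>s. ddiv_dual M (D s) n) has_real_derivative
      ddiv_dual M (\<lambda>a m. curl_T M (H s) a m - J s a m) n) (at s within T)"
    unfolding ddiv_dual_def bdiff_def
    by (intro DERIV_sum DERIV_diff) (use D_deriv prv_in_Idx[OF M_pos n] n s in auto)
  then have "((\<lambda>s. ddiv_dual M (D s) n) has_real_derivative - ddiv_dual M (J s) n) (at s within T)"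
    by (simp add: ddiv_dual_diff ddiv_dual_curl_T[OF M_pos n])
  from DERIV_diff[OF this] show "((\<lambda>s. ddiv_dual M (D s) n - rho s) has_real_derivative 0) (at s within T)"
    using rho_deriv s by fastforce
qed

lemma charge_continuity:
  assumes grid: "grid_ok M L g" and S_diff: "\<And>x. (S has_derivative (\<lambda>h. GS x \<bullet> h)) (at x)"
    and GS_cont: "continuous_on UNIV GS" and S_per: "periodic3 L S" and n: "n \<in> Idx M"
    and X_deriv: "\<forall>p\<in>P. ((\<lambda>s. X s p) has_vector_derivative V t p) (at t within T)"
  shows "((\<lambda>s. \<Sum>p\<in>P. c p * R3 g (kshift S (X s p)) n) has_real_derivative
           - ddiv_dual M (\<lambda>a m. \<Sum>p\<in>P. c p * (comp3 (V t p) a * R2 g (kshift S (X t p)) a m)) n)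
         (at t within T)"
proof -
  have "((\<lambda>s. R3 g (kshift S (X s p)) n) has_real_derivative
      - (\<Sum>a<3. comp3 (V t p) a * bdiff M a (R2 g (kshift S (X t p)) a) n)) (at t within T)"
    if p: "p \<in> P" for p
    using has_derivative_compose[OF X_deriv[rule_format, OF p, unfolded has_vector_derivative_def]
        R3_kshift_has_derivative[OF grid S_diff GS_cont S_per n]]
    unfolding has_field_derivative_def
    by (rule has_derivative_eq_rhs) (simp add: fun_eq_iff comp3_scaleR sum_distrib_left algebra_simps)
  then have "((\<lambda>s. \<Sum>p\<in>P. c p * R3 g (kshift S (X s p)) n) has_real_derivative
      (\<Sum>p\<in>P. c p * - (\<Sum>a<3. comp3 (V t p) a * bdiff M a (R2 g (kshift S (X t p)) a) n)))
      (at t within T)"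
    by (intro DERIV_sum DERIV_cmult)
  then show ?thesis
    by (simp add: ddiv_dual_weighted_sum sum_negf)
qed

theorem lemma2:
  fixes M :: "nat \<Rightarrow> nat" and L :: "nat \<Rightarrow> real" and g :: "nat \<Rightarrow> int \<Rightarrow> real"
    and H2 Ht2 :: "nat \<times> idx \<Rightarrow> nat \<times> idx \<Rightarrow> real"
    and S :: "real^3 \<Rightarrow> real" and GS :: "real^3 \<Rightarrow> real^3"
    and Np :: nat and w :: "nat \<Rightarrow> real" and q m :: real
    and T :: "real set"
    and X V :: "real \<Rightarrow> nat \<Rightarrow> real^3"
    and D B :: "real \<Rightarrow> nat \<Rightarrow> idx \<Rightarrow> real"
  assumes grid: "grid_ok M L g"
    and H2: "spd M H2" and Ht2: "spd M Ht2"
    and S_diff: "\<forall>x. (S has_derivative (\<lambda>h. GS x \<bullet> h)) (at x)"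
    and S_cont: "continuous_on UNIV GS"
    and S_per: "\<forall>x. S (x + pt (L 0) 0 0) = S x \<and> S (x + pt 0 (L 1) 0) = S x
                   \<and> S (x + pt 0 0 (L 2)) = S x"
    and w_pos: "\<forall>p\<in>{1..Np}. 0 < w p" and m_pos: "0 < m"
    and T_int: "is_interval T" and T0: "0 \<in> T"
    and C1_part: "\<forall>p\<in>{1..Np}. \<forall>c. c1_on T (\<lambda>t. X t p $ c) \<and> c1_on T (\<lambda>t. V t p $ c)"
    and C1_field: "\<forall>a<3. \<forall>n\<in>Idx M. c1_on T (\<lambda>t. D t a n) \<and> c1_on T (\<lambda>t. B t a n)"
    and eqX: "\<forall>p\<in>{1..Np}. \<forall>t\<in>T. ((\<lambda>s. X s p) has_vector_derivative V t p) (at t within T)"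
    and eqV: "\<forall>p\<in>{1..Np}. \<forall>t\<in>T. ((\<lambda>s. V s p) has_vector_derivative
                 (q / m) *\<^sub>R (efield_p M g Ht2 (D t) (kshift S (X t p))
                     + cross3 (V t p) (bfield_p M g (B t) (kshift S (X t p))))) (at t within T)"
    and eqB: "\<forall>a<3. \<forall>n\<in>Idx M. \<forall>t\<in>T. ((\<lambda>s. B s a n) has_real_derivative
                 - curl M (mat_app Ht2 M (D t)) a n) (at t within T)"
    and eqD: "\<forall>a<3. \<forall>n\<in>Idx M. \<forall>t\<in>T. ((\<lambda>s. D s a n) has_real_derivative
                 curl_T M (mat_app H2 M (B t)) a n
                 - (\<Sum>p\<in>{1..Np}. w p * q * (comp3 (V t p) a * R2 g (kshift S (X t p)) a n)))
                 (at t within T)"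
    and init_D: "\<forall>n\<in>Idx M. ddiv_dual M (D 0) n = (\<Sum>p\<in>{1..Np}. w p * q * R3 g (kshift S (X 0 p)) n)"
    and init_B: "\<forall>n\<in>Idx M. ddiv M (B 0) n = 0"
  shows "\<forall>t\<in>T. (\<forall>n\<in>Idx M. ddiv_dual M (D t) n = (\<Sum>p\<in>{1..Np}. w p * q * R3 g (kshift S (X t p)) n))
             \<and> (\<forall>n\<in>Idx M. ddiv M (B t) n = 0)"
proof (intro ballI conjI)
  fix t n assume t: "t \<in> T" and n: "n \<in> Idx M"
  have M_pos: "\<forall>a<3. 0 < M a"
    using grid unfolding grid_ok_def by blast
  have T_convex: "convex T"
    using T_int by (rule is_interval_convex)
  have S_diff': "\<And>x. (S has_derivative (\<lambda>h. GS x \<bullet> h)) (at x)"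
    using S_diff by blast
  have S_per': "periodic3 L S"
    using S_per unfolding periodic3_def by blast
  have charge_deriv: "\<forall>s\<in>T. ((\<lambda>s. \<Sum>p\<in>{1..Np}. w p * q * R3 g (kshift S (X s p)) n) has_real_derivative
      - ddiv_dual M (\<lambda>a m. \<Sum>p\<in>{1..Np}. w p * q * (comp3 (V s p) a * R2 g (kshift S (X s p)) a m)) n)
      (at s within T)"
    using charge_continuity[OF grid S_diff' S_cont S_per' n, where P = "{1..Np}" and c = "\<lambda>p. w p * q"]
      eqX by blast
  show "ddiv_dual M (D t) n = (\<Sum>p\<in>{1..Np}. w p * q * R3 g (kshift S (X t p)) n)"
    using ddiv_dual_minus_charge_eq_initial[OF M_pos T_convex T0 eqD charge_deriv n t] init_D n by simp
  show "ddiv M (B t) n = 0"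
    using ddiv_eq_initial[OF M_pos T_convex T0 eqB n t] init_B n by simp
qed

end
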